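(* Let $C_h$ be the set of all $\theta \in [\pi/3,\pi/2]$ such that $\theta = \theta(\Gamma)$ for some $\Gamma \in \mathrm{WR}(\Lambda_h)$. Then $\theta \in C_h$ if and only if $$\cos\theta = \frac{1}{2}\cdot\frac{|n^2+2mn-2m^2|}{n^2-mn+m^2}$$ for some $m,n \in \mathbb{Z}$ with $\gcd(m,n)=1$, $1 \le m/n \le 2$ and $3 \nmid (m+n)$. Moreover, for $\theta \in C_h$ and such integers $m,n$ corresponding to $\theta$, let $$\Gamma_\theta = \frac12\begin{bmatrix} m+n & m-2n \\ (m-n)\sqrt3 & m\sqrt3\end{bmatrix}\mathbb{Z}^2 .$$ Then $\Gamma_\theta \subseteq \Lambda_h$, the similarity class $C_h(\theta)$ equals the set of all $\Omega \in \mathrm{WR}(\Lambda_h)$ similar to $\Gamma_\theta$, and for every $\Gamma \in C_h(\theta)$, $$|\Gamma| \ge |\Gamma_\theta| = n^2-mn+m^2, \qquad |\Lambda_h:\Gamma| \ge |\Lambda_h:\Gamma_\theta| = (2m-n)n .$$ Furthermore, $$C_h(\theta) = \{\sqrt{k}\,A\,\Gamma_\theta \subseteq \Lambda_h : k \in \mathbb{Z}_{>0},\ A \in O_2(\mathbb{R})\}.$$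
   Context: $\Lambda_h = \begin{bmatrix} 1 & -1/2 \\ 0 & \sqrt3/2\end{bmatrix}\mathbb{Z}^2 \subset \mathbb{R}^2$ is the hexagonal lattice. For a lattice $\Gamma = A\mathbb{Z}^2\subset\mathbb{R}^2$ of full rank, $\det(\Gamma)=|\det A|$, and its minimum is $|\Gamma| = \min\{\|y\|^2 : y \in \Gamma\setminus\{0\}\}$ (squared Euclidean norm); vectors attaining it are minimal vectors. For a sublattice $\Gamma\subseteq\Lambda_h$ of full rank, $|\Lambda_h:\Gamma| = \det(\Gamma)/\det(\Lambda_h)$. $\Gamma$ is well-rounded (WR) if it has a basis consisting of minimal vectors (a minimal basis); such a minimal basis can always be chosen with angle between the two vectors in $[\pi/3,\pi/2]$, and this angle is an invariant of $\Gamma$, called the angle $\theta(\Gamma)$. $\mathrm{WR}(\Lambda_h)$ denotes the set of WR sublattices of $\Lambda_h$ (of full rank). Two lattices $\Gamma_1,\Gamma_2$ are similar if $\Gamma_2 = \alpha A\Gamma_1$ for some nonzero real $\alpha$ and $A \in O_2(\mathbb{R})$; two WR lattices are similar iff they have the same angle. For $\theta\in C_h$, $C_h(\theta)$ denotes the set of all $\Omega\in\mathrm{WR}(\Lambda_h)$ with $\theta(\Omega)=\theta$. *)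

theory Defs
  imports "HOL-Analysis.Analysis"
begin

text \<open>Vectors of the plane are elements of real^2; 2x2 real matrices are real^2^2.
  A matrix A acts by A *v x, so the lattice A Z^2 is generated by the columns of A.\<close>

definition int_vecs :: "(real^2) set" where
  "int_vecs = {z. \<forall>i. z $ i \<in> \<int>}"

definition lattice_of :: "real^2^2 \<Rightarrow> (real^2) set" where
  "lattice_of A = (\<lambda>z. A *v z) ` int_vecs"

definition is_lattice :: "(real^2) set \<Rightarrow> bool" where
  "is_lattice L \<longleftrightarrow> (\<exists>A. det A \<noteq> 0 \<and> L = lattice_of A)"

text \<open>det(Gamma) = |det A| for any basis matrix A (independent of the choice of A).\<close>
definition lat_det :: "(real^2) set \<Rightarrow> real" where
  "lat_det L = (THE d. \<exists>A. det A \<noteq> 0 \<and> L = lattice_of A \<and> d = \<bar>det A\<bar>)"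

definition lat_min :: "(real^2) set \<Rightarrow> real" where
  "lat_min L = Inf {(norm y)\<^sup>2 | y. y \<in> L \<and> y \<noteq> 0}"

definition minimal_vector :: "(real^2) set \<Rightarrow> real^2 \<Rightarrow> bool" where
  "minimal_vector L x \<longleftrightarrow> x \<in> L \<and> x \<noteq> 0 \<and> (norm x)\<^sup>2 = lat_min L"

definition cols :: "real^2 \<Rightarrow> real^2 \<Rightarrow> real^2^2" where
  "cols x y = (\<chi> i j. if j = 1 then x $ i else y $ i)"

definition lattice_basis :: "(real^2) set \<Rightarrow> real^2 \<Rightarrow> real^2 \<Rightarrow> bool" where
  "lattice_basis L x y \<longleftrightarrow> det (cols x y) \<noteq> 0 \<and> L = lattice_of (cols x y)"

definition minimal_basis :: "(real^2) set \<Rightarrow> real^2 \<Rightarrow> real^2 \<Rightarrow> bool" where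
  "minimal_basis L x y \<longleftrightarrow> lattice_basis L x y \<and> minimal_vector L x \<and> minimal_vector L y"

definition well_rounded :: "(real^2) set \<Rightarrow> bool" where
  "well_rounded L \<longleftrightarrow> is_lattice L \<and> (\<exists>x y. minimal_basis L x y)"

definition vec_angle :: "real^2 \<Rightarrow> real^2 \<Rightarrow> real" where
  "vec_angle x y = arccos ((x \<bullet> y) / (norm x * norm y))"

text \<open>The angle theta(Gamma) of a WR lattice: the angle of a minimal basis chosen with
  angle in [pi/3, pi/2] (this angle is an invariant of Gamma).\<close>
definition lattice_angle :: "(real^2) set \<Rightarrow> real" where
  "lattice_angle L = (THE t. \<exists>x y. minimal_basis L x y \<and> t = vec_angle x y
                               \<and> pi/3 \<le> t \<and> t \<le> pi/2)"

definition hex_matrix :: "real^2^2" where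
  "hex_matrix = (\<chi> i j. if i = 1 then (if j = 1 then 1 else -1/2)
                        else (if j = 1 then 0 else sqrt 3 / 2))"

definition Lambda_h :: "(real^2) set" where
  "Lambda_h = lattice_of hex_matrix"

definition WR_hex :: "(real^2) set set" where
  "WR_hex = {G. is_lattice G \<and> G \<subseteq> Lambda_h \<and> well_rounded G}"

definition lat_index :: "(real^2) set \<Rightarrow> real" where
  "lat_index G = lat_det G / lat_det Lambda_h"

definition similar :: "(real^2) set \<Rightarrow> (real^2) set \<Rightarrow> bool" where
  "similar G1 G2 \<longleftrightarrow> (\<exists>(\<alpha>::real) A. \<alpha> \<noteq> 0 \<and> orthogonal_matrix A
                        \<and> G2 = (\<lambda>x. \<alpha> *\<^sub>R (A *v x)) ` G1)"

definition C_h :: "real set" where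
  "C_h = {t. pi/3 \<le> t \<and> t \<le> pi/2 \<and> (\<exists>G\<in>WR_hex. t = lattice_angle G)}"

definition C_h_class :: "real \<Rightarrow> (real^2) set set" where
  "C_h_class t = {G \<in> WR_hex. lattice_angle G = t}"

definition Gamma_mat :: "int \<Rightarrow> int \<Rightarrow> real^2^2" where
  "Gamma_mat m n = (\<chi> i j. (1/2) * (if i = 1 then (if j = 1 then of_int (m + n) else of_int (m - 2*n))
                        else (if j = 1 then of_int (m - n) * sqrt 3 else of_int m * sqrt 3)))"

definition Gamma_theta :: "int \<Rightarrow> int \<Rightarrow> (real^2) set" where
  "Gamma_theta m n = lattice_of (Gamma_mat m n)"

definition hex_param :: "real \<Rightarrow> int \<Rightarrow> int \<Rightarrow> bool" where
  "hex_param t m n \<longleftrightarrow> coprime m n \<and> 1 \<le> real_of_int m / real_of_int n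
     \<and> real_of_int m / real_of_int n \<le> 2 \<and> \<not> (3 dvd (m + n))
     \<and> cos t = (1/2) * (\<bar>real_of_int (n^2 + 2*m*n - 2*m^2)\<bar> / real_of_int (n^2 - m*n + m^2))"

end

theory Submission
  imports Defs
begin

text \<open>A well-rounded planar lattice has a minimal basis \<open>x, y\<close> with \<open>\<bar>x\<bar> = \<bar>y\<bar>\<close> and
  \<open>2\<bar>x \<bullet> y\<bar> \<le> \<bar>x\<bar>\<^sup>2\<close>; it determines minimum, determinant and angle, and two such lattices with
  the same angle differ by a similarity. For a sublattice of \<open>\<Lambda>\<^sub>h\<close> the integers
  \<open>X = 2\<bar>x \<bullet> y\<bar>\<close>, \<open>Y = 2 det/\<surd>3\<close>, \<open>Z = 2\<bar>x\<bar>\<^sup>2\<close> satisfy \<open>X\<^sup>2 + 3Y\<^sup>2 = Z\<^sup>2\<close> and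
  \<open>cos \<theta> = X/Z\<close>. Parametrising the rational points of this ellipse by the slope \<open>(Z + X)/Y\<close>
  yields the stated formula for \<open>cos \<theta>\<close>, and the substitution \<open>(m, n) \<mapsto> (m + n, 2m - n)\<close>
  makes \<open>m, n\<close> coprime with \<open>\<not> 3 dvd m + n\<close>. Conversely \<open>\<Gamma>\<^sub>\<theta>\<close> has angle \<open>\<theta>\<close>,
  minimum \<open>Q = n\<^sup>2 - mn + m\<^sup>2\<close> and index \<open>(2m - n)n\<close>, and these are coprime. Any \<open>\<Omega>\<close> of
  angle \<open>\<theta>\<close> is \<open>\<surd>(N/Q) A \<Gamma>\<^sub>\<theta>\<close> with \<open>N = |\<Omega>|\<close>; integrality of its index then forces
  \<open>Q dvd N\<close>, so \<open>\<Omega> = \<surd>k A \<Gamma>\<^sub>\<theta>\<close>, and minimum and index of \<open>\<Omega>\<close> are \<open>k\<close> times those of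
  \<open>\<Gamma>\<^sub>\<theta>\<close>.\<close>

section \<open>Planar lattices given by a basis\<close>

lemma cols_nth [simp]: "cols x y $ i $ 1 = x $ i" "cols x y $ i $ 2 = y $ i"
  by (auto simp: cols_def)

lemma det_cols: "det (cols x y) = x$1 * y$2 - y$1 * x$2"
  by (simp add: det_2)

lemma vec2_eq_iff: "(u::real^2) = v \<longleftrightarrow> u$1 = v$1 \<and> u$2 = v$2"
  by (auto simp: vec_eq_iff forall_2)

lemma inner_vec2: "(x::real^2) \<bullet> y = x$1 * y$1 + x$2 * y$2"
  by (simp add: inner_vec_def sum_2)

lemma cols_mult_vec: "cols x y *v z = z$1 *\<^sub>R x + z$2 *\<^sub>R y"
  by (simp add: vec2_eq_iff matrix_vector_mult_def sum_2 mult.commute)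

lemma matrix_eq_cols: "(A::real^2^2) = cols (\<chi> i. A$i$1) (\<chi> i. A$i$2)"
  by (auto simp: vec_eq_iff forall_2 cols_def)

lemma det_cols_nonzero_imp_nonzero: "det (cols x y) \<noteq> 0 \<Longrightarrow> x \<noteq> 0 \<and> y \<noteq> 0"
  by (auto simp: det_cols)

lemma det_cols_squared: "(det (cols x y))\<^sup>2 = (x \<bullet> x) * (y \<bullet> y) - (x \<bullet> y)\<^sup>2"
  by (simp add: det_cols inner_vec2 power2_eq_square algebra_simps)

lemma mem_lattice_of_cols:
  "z \<in> lattice_of (cols x y) \<longleftrightarrow> (\<exists>i j. z = of_int i *\<^sub>R x + of_int j *\<^sub>R y)"
proof
  assume "z \<in> lattice_of (cols x y)"
  then obtain w where "w \<in> int_vecs" and z: "z = w$1 *\<^sub>R x + w$2 *\<^sub>R y"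
    by (auto simp: lattice_of_def cols_mult_vec)
  then have "w$1 \<in> \<int>" "w$2 \<in> \<int>" by (auto simp: int_vecs_def)
  then obtain i j where "w$1 = of_int i" "w$2 = of_int j" by (metis Ints_cases)
  with z show "\<exists>i j. z = of_int i *\<^sub>R x + of_int j *\<^sub>R y" by auto
next
  assume "\<exists>i j. z = of_int i *\<^sub>R x + of_int j *\<^sub>R y"
  then obtain i j where z: "z = of_int i *\<^sub>R x + of_int j *\<^sub>R y" by blast
  have "vector [of_int i, of_int j] \<in> int_vecs" by (auto simp: int_vecs_def forall_2)
  moreover have "z = cols x y *v vector [of_int i, of_int j]" by (simp add: z cols_mult_vec)
  ultimately show "z \<in> lattice_of (cols x y)" by (auto simp: lattice_of_def)
qed

lemma basis_mem_lattice_of_cols: "x \<in> lattice_of (cols x y)" "y \<in> lattice_of (cols x y)"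
  unfolding mem_lattice_of_cols
  by (metis add.right_neutral add_0 of_int_0 of_int_1 scaleR_one scaleR_zero_left)+

lemma is_lattice_iff_cols: "is_lattice L \<longleftrightarrow> (\<exists>x y. det (cols x y) \<noteq> 0 \<and> L = lattice_of (cols x y))"
  unfolding is_lattice_def by (metis matrix_eq_cols)

lemma lattice_of_cols_neg: "lattice_of (cols x (-y)) = lattice_of (cols x y)"
  unfolding set_eq_iff mem_lattice_of_cols
  by (metis minus_minus of_int_minus scaleR_minus_left scaleR_minus_right)

text \<open>The two bases are related by a pair of mutually inverse integer matrices, so their
  determinants are units of \<open>\<int>\<close>.\<close>
lemma abs_det_cols_eq_if_same_lattice:
  assumes "det (cols x y) \<noteq> 0" "lattice_of (cols x y) = lattice_of (cols u v)"
  shows "\<bar>det (cols x y)\<bar> = \<bar>det (cols u v)\<bar>"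
proof -
  have "u \<in> lattice_of (cols x y)" "v \<in> lattice_of (cols x y)"
    using basis_mem_lattice_of_cols assms(2) by auto
  then obtain a b c d where u: "u = of_int a *\<^sub>R x + of_int b *\<^sub>R y"
    and v: "v = of_int c *\<^sub>R x + of_int d *\<^sub>R y"
    unfolding mem_lattice_of_cols by blast
  have "x \<in> lattice_of (cols u v)" "y \<in> lattice_of (cols u v)"
    using basis_mem_lattice_of_cols assms(2) by auto
  then obtain a' b' c' d' where x: "x = of_int a' *\<^sub>R u + of_int b' *\<^sub>R v"
    and y: "y = of_int c' *\<^sub>R u + of_int d' *\<^sub>R v"
    unfolding mem_lattice_of_cols by blast
  have du: "det (cols u v) = of_int (a*d - b*c) * det (cols x y)"
    unfolding u v det_cols by (simp add: algebra_simps)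
  have "det (cols x y) = of_int (a'*d' - b'*c') * det (cols u v)"
    unfolding x y det_cols by (simp add: algebra_simps)
  with du have "of_int ((a'*d' - b'*c') * (a*d - b*c)) * det (cols x y) = 1 * det (cols x y)"
    by (simp add: mult.assoc)
  hence "(a'*d' - b'*c') * (a*d - b*c) = 1"
    using assms(1) by (metis mult_right_cancel of_int_1 of_int_eq_iff)
  hence "\<bar>a*d - b*c\<bar> = 1" by (auto simp: zmult_eq_1_iff)
  hence "\<bar>of_int (a*d - b*c)\<bar> = (1::real)" by (metis of_int_1 of_int_abs)
  thus ?thesis using du by (metis abs_mult mult_1)
qed

lemma lat_det_cols:
  assumes "det (cols x y) \<noteq> 0"
  shows "lat_det (lattice_of (cols x y)) = \<bar>det (cols x y)\<bar>"
  unfolding lat_det_def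
proof (rule the_equality)
  fix d assume "\<exists>A. det A \<noteq> 0 \<and> lattice_of (cols x y) = lattice_of A \<and> d = \<bar>det A\<bar>"
  then show "d = \<bar>det (cols x y)\<bar>"
    using abs_det_cols_eq_if_same_lattice[OF assms] matrix_eq_cols by metis
qed (use assms in blast)

lemma lat_min_le_inner: "z \<in> L \<Longrightarrow> z \<noteq> 0 \<Longrightarrow> lat_min L \<le> z \<bullet> z"
  unfolding lat_min_def power2_norm_eq_inner
  by (rule cInf_lower) (auto intro!: bdd_belowI[of _ 0])

section \<open>Reduced bases\<close>

text \<open>Exactly the minimal bases of well-rounded planar lattices; their angle lies in
  \<open>[pi/3, 2pi/3]\<close>.\<close>
definition reduced_basis :: "real^2 \<Rightarrow> real^2 \<Rightarrow> bool" where
  "reduced_basis x y \<longleftrightarrow> det (cols x y) \<noteq> 0 \<and> x \<bullet> x = y \<bullet> y \<and> 2 * \<bar>x \<bullet> y\<bar> \<le> x \<bullet> x"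

lemma reduced_basis_neg: "reduced_basis x y \<Longrightarrow> reduced_basis x (-y)"
  by (auto simp: reduced_basis_def det_cols)

lemma reduced_basis_obtains_nonneg_inner:
  assumes "reduced_basis x y"
  obtains y' where "reduced_basis x y'" "lattice_of (cols x y') = lattice_of (cols x y)"
    "x \<bullet> y' = \<bar>x \<bullet> y\<bar>"
  using that[of "if x \<bullet> y \<ge> 0 then y else -y"] assms reduced_basis_neg lattice_of_cols_neg
  by (cases "x \<bullet> y \<ge> 0") auto

lemma reduced_basis_inner_pos: "reduced_basis x y \<Longrightarrow> x \<bullet> x > 0"
  using det_cols_nonzero_imp_nonzero by (auto simp: reduced_basis_def)

lemma int_quadratic_form_ge_one:
  fixes i j :: int
  assumes "i \<noteq> 0 \<or> j \<noteq> 0"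
  shows "i*i + j*j - \<bar>i*j\<bar> \<ge> 1"
proof (cases "i*j = 0")
  case True
  then have "0 < i*i \<or> 0 < j*j"
    using assms by (auto simp: zero_less_mult_iff linorder_neq_iff)
  with True show ?thesis by auto
next
  case False
  have "0 \<le> (\<bar>i\<bar> - \<bar>j\<bar>)^2" by simp
  hence "i*i + j*j \<ge> 2*\<bar>i*j\<bar>" by (simp add: power2_eq_square abs_mult algebra_simps)
  with False show ?thesis by linarith
qed

lemma reduced_basis_shortest:
  assumes red: "reduced_basis x y" and z: "z \<in> lattice_of (cols x y)" "z \<noteq> 0"
  shows "x \<bullet> x \<le> z \<bullet> z"
proof -
  obtain i j where zij: "z = of_int i *\<^sub>R x + of_int j *\<^sub>R y"
    using z(1) unfolding mem_lattice_of_cols by blast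
  with z(2) have "i \<noteq> 0 \<or> j \<noteq> 0" by auto
  hence ge1: "real_of_int (i*i + j*j - \<bar>i*j\<bar>) \<ge> 1"
    using int_quadratic_form_ge_one by (metis of_int_1 of_int_le_iff)
  define N where "N = x \<bullet> x"
  have "y \<bullet> y = N" and hP: "2 * \<bar>x \<bullet> y\<bar> \<le> N" and "N \<ge> 0"
    using red by (auto simp: reduced_basis_def N_def)
  hence zz: "z \<bullet> z = of_int (i*i + j*j) * N + of_int (i*j) * (2 * (x \<bullet> y))"
    unfolding zij by (simp add: inner_add inner_commute N_def algebra_simps)
  have "real_of_int (i*i + j*j - \<bar>i*j\<bar>) * N \<ge> N"
    using ge1 \<open>N \<ge> 0\<close> by (simp add: mult_le_cancel_right1)
  moreover have "\<bar>of_int (i*j) * (2 * (x \<bullet> y))\<bar> \<le> of_int \<bar>i*j\<bar> * N"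
    using hP by (simp add: abs_mult mult_left_mono)
  ultimately show ?thesis unfolding zz N_def[symmetric] by (simp add: algebra_simps)
qed

lemma lat_min_reduced_basis:
  assumes "reduced_basis x y"
  shows "lat_min (lattice_of (cols x y)) = x \<bullet> x"
  unfolding lat_min_def
proof (rule cInf_eq_minimum)
  show "x \<bullet> x \<in> {(norm z)\<^sup>2 |z. z \<in> lattice_of (cols x y) \<and> z \<noteq> 0}"
    using basis_mem_lattice_of_cols(1) reduced_basis_inner_pos[OF assms]
    by (auto simp: power2_norm_eq_inner)
qed (use reduced_basis_shortest[OF assms] in \<open>auto simp: power2_norm_eq_inner\<close>)

lemma reduced_basis_imp_minimal_basis:
  "reduced_basis x y \<Longrightarrow> minimal_basis (lattice_of (cols x y)) x y"
  using basis_mem_lattice_of_cols det_cols_nonzero_imp_nonzero lat_min_reduced_basis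
  by (auto simp: minimal_basis_def lattice_basis_def minimal_vector_def reduced_basis_def
      power2_norm_eq_inner)

text \<open>Minimality of \<open>x\<close> and \<open>y\<close> against the lattice vectors \<open>x \<plusminus> y\<close> is the reduction condition.\<close>
lemma minimal_basis_imp_reduced_basis:
  assumes "minimal_basis L x y"
  shows "reduced_basis x y" "L = lattice_of (cols x y)"
proof -
  have d: "det (cols x y) \<noteq> 0" and L: "L = lattice_of (cols x y)"
    and mx: "x \<bullet> x = lat_min L" and my: "y \<bullet> y = lat_min L"
    using assms
    by (auto simp: minimal_basis_def lattice_basis_def minimal_vector_def
        power2_norm_eq_inner)
  have "x - y \<in> L" "x + y \<in> L" unfolding L mem_lattice_of_cols
    by (metis of_int_1 of_int_minus scaleR_minus_left scaleR_one diff_conv_add_uminus)+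
  moreover have "x - y \<noteq> 0" "x + y \<noteq> 0"
    using d by (auto simp: det_cols vec2_eq_iff eq_neg_iff_add_eq_0[symmetric])
  ultimately have "lat_min L \<le> (x-y) \<bullet> (x-y)" "lat_min L \<le> (x+y) \<bullet> (x+y)"
    using lat_min_le_inner by auto
  hence "2*\<bar>x \<bullet> y\<bar> \<le> x \<bullet> x"
    using mx my by (simp add: inner_diff inner_add inner_commute algebra_simps)
  thus "reduced_basis x y" using d mx my by (simp add: reduced_basis_def)
  show "L = lattice_of (cols x y)" by (fact L)
qed

lemma well_rounded_obtains_reduced_basis:
  assumes "well_rounded L"
  obtains x y where "reduced_basis x y" "L = lattice_of (cols x y)"
  using assms minimal_basis_imp_reduced_basis unfolding well_rounded_def by blast

lemma reduced_basis_well_rounded: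
  assumes "reduced_basis x y"
  shows "is_lattice (lattice_of (cols x y))" "well_rounded (lattice_of (cols x y))"
  using assms reduced_basis_imp_minimal_basis
  unfolding well_rounded_def is_lattice_iff_cols by (auto simp: reduced_basis_def)

section \<open>The angle of a well-rounded lattice\<close>

lemma arccos_half: "arccos (1/2) = pi/3"
  using arccos_cos[of "pi/3"] by (simp add: cos_60)

lemma arccos_bounds_if_le_half:
  assumes "0 \<le> c" "c \<le> 1/2"
  shows "pi/3 \<le> arccos c" "arccos c \<le> pi/2"
  using arccos_le_arccos[of c "1/2"] arccos_le_pi2[of c] assms by (auto simp: arccos_half)

lemma vec_angle_reduced_basis:
  assumes "reduced_basis x y"
  shows "vec_angle x y = arccos (x \<bullet> y / (x \<bullet> x))"
  using assms by (simp add: vec_angle_def reduced_basis_def norm_eq_sqrt_inner)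

text \<open>Both bases span parallelograms of the same area and have the same length, so by the
  Lagrange identity their inner products agree up to sign.\<close>
lemma minimal_basis_same_gram:
  assumes red: "reduced_basis x y" and mb: "minimal_basis (lattice_of (cols x y)) x' y'"
  shows "x' \<bullet> x' = x \<bullet> x" "y' \<bullet> y' = x \<bullet> x" "\<bar>x' \<bullet> y'\<bar> = \<bar>x \<bullet> y\<bar>"
proof -
  have red': "reduced_basis x' y'" and L: "lattice_of (cols x y) = lattice_of (cols x' y')"
    using minimal_basis_imp_reduced_basis[OF mb] by auto
  show xx: "x' \<bullet> x' = x \<bullet> x"
    using lat_min_reduced_basis[OF red'] lat_min_reduced_basis[OF red] L by simp
  then show yy: "y' \<bullet> y' = x \<bullet> x" using red' by (simp add: reduced_basis_def)
  have "\<bar>det (cols x y)\<bar> = \<bar>det (cols x' y')\<bar>"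
    using abs_det_cols_eq_if_same_lattice red L by (simp add: reduced_basis_def)
  hence "(det (cols x y))\<^sup>2 = (det (cols x' y'))\<^sup>2" by (metis power2_abs)
  hence "(x' \<bullet> y')\<^sup>2 = (x \<bullet> y)\<^sup>2"
    using red xx yy unfolding det_cols_squared by (simp add: reduced_basis_def)
  then show "\<bar>x' \<bullet> y'\<bar> = \<bar>x \<bullet> y\<bar>" by (metis real_sqrt_abs)
qed

lemma lattice_angle_reduced_basis:
  assumes red: "reduced_basis x y"
  shows "lattice_angle (lattice_of (cols x y)) = arccos (\<bar>x \<bullet> y\<bar> / (x \<bullet> x))"
proof -
  define L where "L = lattice_of (cols x y)"
  define c where "c = \<bar>x \<bullet> y\<bar> / (x \<bullet> x)"
  have pos: "x \<bullet> x > 0" by (rule reduced_basis_inner_pos[OF red])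
  have c: "0 \<le> c" "c \<le> 1/2" using red pos by (auto simp: c_def reduced_basis_def field_simps)
  obtain y0 where "reduced_basis x y0" "lattice_of (cols x y0) = L" "x \<bullet> y0 = \<bar>x \<bullet> y\<bar>"
    using reduced_basis_obtains_nonneg_inner[OF red] unfolding L_def .
  then have "minimal_basis L x y0" "vec_angle x y0 = arccos c"
    using reduced_basis_imp_minimal_basis vec_angle_reduced_basis by (metis c_def)+
  then have witness: "\<exists>x' y'. minimal_basis L x' y' \<and> arccos c = vec_angle x' y'
      \<and> pi/3 \<le> arccos c \<and> arccos c \<le> pi/2"
    using arccos_bounds_if_le_half[OF c] by metis
  show ?thesis unfolding L_def[symmetric] lattice_angle_def c_def[symmetric]
  proof (rule the_equality)
    fix t assume "\<exists>x' y'. minimal_basis L x' y' \<and> t = vec_angle x' y' \<and> pi/3 \<le> t \<and> t \<le> pi/2"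
    then obtain x' y' where mb: "minimal_basis L x' y'"
      and t: "t = vec_angle x' y'" "pi/3 \<le> t" "t \<le> pi/2"
      by blast
    note gram = minimal_basis_same_gram[OF red mb[unfolded L_def]]
    have red': "reduced_basis x' y'" using minimal_basis_imp_reduced_basis(1)[OF mb] .
    have ct: "cos t = x' \<bullet> y' / (x \<bullet> x)"
      unfolding t vec_angle_reduced_basis[OF red'] gram(1) using red' pos gram(1)
      by (intro cos_arccos) (auto simp: reduced_basis_def field_simps)
    moreover have "cos t \<ge> 0" using t by (intro cos_ge_zero) auto
    ultimately have "x' \<bullet> y' \<ge> 0" using pos by (simp add: zero_le_divide_iff)
    hence "cos t = c" using ct gram(3) by (simp add: c_def)
    thus "t = arccos c" using t arccos_cos[of t] by auto
  qed (fact witness)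
qed

lemma cos_lattice_angle_reduced_basis:
  assumes "reduced_basis x y"
  shows "cos (lattice_angle (lattice_of (cols x y))) = \<bar>x \<bullet> y\<bar> / (x \<bullet> x)"
  unfolding lattice_angle_reduced_basis[OF assms]
  using assms reduced_basis_inner_pos[OF assms]
  by (intro cos_arccos) (auto simp: reduced_basis_def field_simps)

lemma lattice_angle_reduced_basis_bounds:
  assumes "reduced_basis x y"
  shows "pi/3 \<le> lattice_angle (lattice_of (cols x y))"
    "lattice_angle (lattice_of (cols x y)) \<le> pi/2"
  unfolding lattice_angle_reduced_basis[OF assms]
  using assms reduced_basis_inner_pos[OF assms]
  by (intro arccos_bounds_if_le_half; simp add: reduced_basis_def field_simps)+

section \<open>Similarity\<close>

lemma orthogonal_matrix_inner:
  fixes A :: "real^'n^'n"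
  assumes "orthogonal_matrix A"
  shows "(A *v u) \<bullet> (A *v v) = u \<bullet> v"
  using assms orthogonal_transformation_matrix[of "\<lambda>z. A *v z"]
  by (simp add: orthogonal_transformation_def)

lemma image_lattice_of_cols:
  "(\<lambda>z. \<alpha> *\<^sub>R (A *v z)) ` lattice_of (cols x y)
     = lattice_of (cols (\<alpha> *\<^sub>R (A *v x)) (\<alpha> *\<^sub>R (A *v y)))"
proof -
  have "\<alpha> *\<^sub>R (A *v (cols x y *v z)) = cols (\<alpha> *\<^sub>R (A *v x)) (\<alpha> *\<^sub>R (A *v y)) *v z" for z
    unfolding cols_mult_vec
    by (simp add: matrix_vector_right_distrib matrix_vector_mult_scaleR
        scaleR_add_right mult.commute)
  thus ?thesis unfolding lattice_of_def image_image by simp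
qed

lemma abs_det_cols_if_gram_scaled:
  assumes "u \<bullet> u = a * (x \<bullet> x)" "v \<bullet> v = a * (y \<bullet> y)" "u \<bullet> v = a * (x \<bullet> y)" "a \<ge> 0"
  shows "\<bar>det (cols u v)\<bar> = a * \<bar>det (cols x y)\<bar>"
proof -
  have "\<bar>det (cols u v)\<bar>\<^sup>2 = (u \<bullet> u)*(v \<bullet> v) - (u \<bullet> v)\<^sup>2"
    by (simp add: det_cols_squared)
  also have "\<dots> = a\<^sup>2 * ((x \<bullet> x)*(y \<bullet> y) - (x \<bullet> y)\<^sup>2)"
    by (simp add: assms power2_eq_square algebra_simps)
  also have "\<dots> = (a * \<bar>det (cols x y)\<bar>)\<^sup>2"
    by (simp add: det_cols_squared power_mult_distrib)
  finally show ?thesis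
    by (rule power2_eq_imp_eq) (use assms(4) in auto)
qed

context
  fixes A :: "real^2^2" and \<alpha> :: real
  assumes A: "orthogonal_matrix A" and \<alpha>: "\<alpha> \<noteq> 0"
begin

lemma inner_scaled_orthogonal:
  "(\<alpha> *\<^sub>R (A *v u)) \<bullet> (\<alpha> *\<^sub>R (A *v v)) = \<alpha>\<^sup>2 * (u \<bullet> v)"
  using orthogonal_matrix_inner[OF A] by (simp add: power2_eq_square)

lemma reduced_basis_scaled_orthogonal:
  assumes "reduced_basis x y"
  shows "reduced_basis (\<alpha> *\<^sub>R (A *v x)) (\<alpha> *\<^sub>R (A *v y))"
    and "\<bar>det (cols (\<alpha> *\<^sub>R (A *v x)) (\<alpha> *\<^sub>R (A *v y)))\<bar> = \<alpha>\<^sup>2 * \<bar>det (cols x y)\<bar>"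
proof -
  show det: "\<bar>det (cols (\<alpha> *\<^sub>R (A *v x)) (\<alpha> *\<^sub>R (A *v y)))\<bar> = \<alpha>\<^sup>2 * \<bar>det (cols x y)\<bar>"
    by (rule abs_det_cols_if_gram_scaled)
      (simp_all add: orthogonal_matrix_inner[OF A] power2_eq_square)
  have "\<alpha>\<^sup>2 > 0" using \<alpha> by simp
  with assms det show "reduced_basis (\<alpha> *\<^sub>R (A *v x)) (\<alpha> *\<^sub>R (A *v y))"
    unfolding reduced_basis_def inner_scaled_orthogonal by (auto simp: abs_mult)
qed

lemma well_rounded_scaled_orthogonal:
  assumes "reduced_basis x y"
  shows "is_lattice ((\<lambda>z. \<alpha> *\<^sub>R (A *v z)) ` lattice_of (cols x y))"
    "well_rounded ((\<lambda>z. \<alpha> *\<^sub>R (A *v z)) ` lattice_of (cols x y))"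
  unfolding image_lattice_of_cols
  by (rule reduced_basis_well_rounded[OF reduced_basis_scaled_orthogonal(1)[OF assms]])+

lemma lat_min_scaled_orthogonal:
  assumes "reduced_basis x y"
  shows "lat_min ((\<lambda>z. \<alpha> *\<^sub>R (A *v z)) ` lattice_of (cols x y))
    = \<alpha>\<^sup>2 * lat_min (lattice_of (cols x y))"
  unfolding image_lattice_of_cols lat_min_reduced_basis[OF assms]
    lat_min_reduced_basis[OF reduced_basis_scaled_orthogonal(1)[OF assms]]
  by (rule inner_scaled_orthogonal)

lemma lat_det_scaled_orthogonal:
  assumes "reduced_basis x y"
  shows "lat_det ((\<lambda>z. \<alpha> *\<^sub>R (A *v z)) ` lattice_of (cols x y))
    = \<alpha>\<^sup>2 * lat_det (lattice_of (cols x y))"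
  using reduced_basis_scaled_orthogonal[OF assms] assms
  unfolding image_lattice_of_cols by (simp add: lat_det_cols reduced_basis_def)

lemma similar_scaled_orthogonal_image: "similar ((\<lambda>z. \<alpha> *\<^sub>R (A *v z)) ` L) L"
proof -
  have "transpose A *v (A *v z) = z" for z
    using A by (simp add: orthogonal_matrix_def matrix_vector_mul_assoc)
  hence "(1/\<alpha>) *\<^sub>R (transpose A *v (\<alpha> *\<^sub>R (A *v z))) = z" for z
    using \<alpha> by (simp add: matrix_vector_mult_scaleR)
  hence "(\<lambda>z. (1/\<alpha>) *\<^sub>R (transpose A *v z)) ` (\<lambda>z. \<alpha> *\<^sub>R (A *v z)) ` L = L"
    unfolding image_image by simp
  thus ?thesis using A \<alpha> unfolding similar_def
    by (metis orthogonal_matrix_transpose divide_eq_0_iff one_neq_zero)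
qed

lemma lattice_angle_scaled_orthogonal:
  assumes "reduced_basis x y"
  shows "lattice_angle ((\<lambda>z. \<alpha> *\<^sub>R (A *v z)) ` lattice_of (cols x y))
       = lattice_angle (lattice_of (cols x y))"
proof -
  have "\<alpha>\<^sup>2 > 0" using \<alpha> by simp
  hence "\<bar>\<alpha>\<^sup>2 * (x \<bullet> y)\<bar> / (\<alpha>\<^sup>2 * (x \<bullet> x)) = \<bar>x \<bullet> y\<bar> / (x \<bullet> x)"
    by (simp add: abs_mult)
  thus ?thesis
    unfolding image_lattice_of_cols
      lattice_angle_reduced_basis[OF reduced_basis_scaled_orthogonal(1)[OF assms]]
      lattice_angle_reduced_basis[OF assms] inner_scaled_orthogonal by (rule arg_cong)
qed

end

text \<open>Two bases with the same Gram matrix differ by an orthogonal map, namely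
  \<open>cols x y ** (cols u v)\<^sup>-\<^sup>1\<close>.\<close>
lemma orthogonal_matrix_mapping_basis:
  assumes d: "det (cols u v) \<noteq> 0"
    and gram: "u \<bullet> u = x \<bullet> x" "u \<bullet> v = x \<bullet> y" "v \<bullet> v = y \<bullet> y"
  obtains A where "orthogonal_matrix A" "\<And>z. A *v (cols u v *v z) = cols x y *v z"
proof -
  define C where "C = cols u v"
  define X where "X = cols x y"
  have "invertible C" using d invertible_det_nz by (auto simp: C_def)
  then obtain Ci where Ci: "C ** Ci = mat 1" "Ci ** C = mat 1" unfolding invertible_def by blast
  define A where "A = X ** Ci"
  have CX: "transpose C ** C = transpose X ** X"
    using gram by (simp add: C_def X_def vec_eq_iff forall_2 matrix_matrix_mult_def transpose_def
        sum_2 inner_vec2 inner_commute mult.commute)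
  have "transpose A ** A = transpose Ci ** (transpose X ** X) ** Ci"
    by (simp add: A_def matrix_transpose_mul matrix_mul_assoc)
  also have "\<dots> = transpose (C ** Ci) ** (C ** Ci)"
    by (simp add: CX[symmetric] matrix_transpose_mul matrix_mul_assoc)
  finally have "orthogonal_matrix A" using Ci by (simp add: orthogonal_matrix)
  moreover have "A *v (C *v z) = X *v z" for z
    by (simp add: A_def matrix_vector_mul_assoc matrix_mul_assoc[symmetric] Ci)
  ultimately show thesis using that by (simp add: C_def X_def)
qed

lemma similar_if_cos_eq:
  assumes red: "reduced_basis x y" "reduced_basis u v"
    and cos_eq: "\<bar>x \<bullet> y\<bar> / (x \<bullet> x) = \<bar>u \<bullet> v\<bar> / (u \<bullet> u)"
  obtains A where "orthogonal_matrix A"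
    "lattice_of (cols x y) = (\<lambda>z. sqrt (x \<bullet> x / (u \<bullet> u)) *\<^sub>R (A *v z)) ` lattice_of (cols u v)"
proof -
  obtain y0 where y0: "reduced_basis x y0" "lattice_of (cols x y0) = lattice_of (cols x y)"
    "x \<bullet> y0 = \<bar>x \<bullet> y\<bar>"
    using reduced_basis_obtains_nonneg_inner[OF red(1)] .
  obtain v0 where v0: "reduced_basis u v0" "lattice_of (cols u v0) = lattice_of (cols u v)"
    "u \<bullet> v0 = \<bar>u \<bullet> v\<bar>"
    using reduced_basis_obtains_nonneg_inner[OF red(2)] .
  have Nx: "x \<bullet> x > 0" and Nu: "u \<bullet> u > 0"
    using reduced_basis_inner_pos red by auto
  define \<alpha> where "\<alpha> = sqrt (x \<bullet> x / (u \<bullet> u))"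
  have \<alpha>: "\<alpha> > 0" "\<alpha>\<^sup>2 = x \<bullet> x / (u \<bullet> u)" using Nx Nu by (simp_all add: \<alpha>_def)
  define x' where "x' = (1/\<alpha>) *\<^sub>R x"
  define y' where "y' = (1/\<alpha>) *\<^sub>R y0"
  have "x' \<bullet> x' = (x \<bullet> x) / \<alpha>\<^sup>2" "x' \<bullet> y' = (x \<bullet> y0) / \<alpha>\<^sup>2" "y' \<bullet> y' = (y0 \<bullet> y0) / \<alpha>\<^sup>2"
    by (simp_all add: x'_def y'_def power2_eq_square)
  moreover have "x \<bullet> x = y0 \<bullet> y0" "u \<bullet> u = v0 \<bullet> v0"
    using y0(1) v0(1) by (simp_all add: reduced_basis_def)
  ultimately have "u \<bullet> u = x' \<bullet> x'" "u \<bullet> v0 = x' \<bullet> y'" "v0 \<bullet> v0 = y' \<bullet> y'"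
    using \<alpha>(2) Nx Nu cos_eq y0(3) v0(3) by (simp_all add: field_simps)
  then obtain A where A: "orthogonal_matrix A" "\<And>z. A *v (cols u v0 *v z) = cols x' y' *v z"
    using orthogonal_matrix_mapping_basis v0(1) unfolding reduced_basis_def by metis
  have "\<alpha> *\<^sub>R (A *v (cols u v0 *v z)) = cols x y0 *v z" for z
    using A(2)[of z] \<alpha> by (simp add: cols_mult_vec x'_def y'_def scaleR_add_right)
  hence "lattice_of (cols x y0) = (\<lambda>z. \<alpha> *\<^sub>R (A *v z)) ` lattice_of (cols u v0)"
    unfolding lattice_of_def image_image by simp
  with A(1) y0(2) v0(2) show thesis using that by (simp add: \<alpha>_def)
qed

section \<open>Arithmetic of the parameters \<open>m, n\<close>\<close>

text \<open>The Gram matrix of the basis of \<open>\<Gamma>\<^sub>\<theta>\<close> has diagonal entries \<open>hex_norm m n\<close> and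
  off-diagonal entries \<open>- hex_skew m n / 2\<close>.\<close>
abbreviation hex_norm :: "int \<Rightarrow> int \<Rightarrow> int" where
  "hex_norm m n \<equiv> n^2 - m*n + m^2"

abbreviation hex_skew :: "int \<Rightarrow> int \<Rightarrow> int" where
  "hex_skew m n \<equiv> n^2 + 2*m*n - 2*m^2"

definition hex_cos :: "int \<Rightarrow> int \<Rightarrow> real" where
  "hex_cos m n = \<bar>of_int (hex_skew m n)\<bar> / (2 * of_int (hex_norm m n))"

lemma hex_param_iff:
  "hex_param t m n \<longleftrightarrow> coprime m n \<and> 1 \<le> real_of_int m / real_of_int n
     \<and> real_of_int m / real_of_int n \<le> 2 \<and> \<not> 3 dvd (m + n) \<and> cos t = hex_cos m n"
  unfolding hex_param_def hex_cos_def by auto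

lemma hex_param_range:
  assumes "1 \<le> real_of_int m / real_of_int n" "real_of_int m / real_of_int n \<le> 2"
  shows "(0 < n \<and> n \<le> m \<and> m \<le> 2*n) \<or> (0 < -n \<and> -n \<le> -m \<and> -m \<le> 2*(-n))"
proof (cases "n > 0")
  case True
  with assms have "real_of_int n \<le> real_of_int m" "real_of_int m \<le> 2 * real_of_int n"
    by (simp_all add: field_simps)
  with True show ?thesis by linarith
next
  case False
  with assms have "n < 0" by (cases "n = 0") auto
  with assms have "real_of_int m \<le> real_of_int n" "2 * real_of_int n \<le> real_of_int m"
    by (simp_all add: field_simps)
  with \<open>n < 0\<close> show ?thesis by linarith
qed

lemma hex_norm_pos:
  assumes "0 < n" "n \<le> m"
  shows "hex_norm m n > 0"
proof -
  have "hex_norm m n = n^2 + m * (m - n)" by (simp add: power2_eq_square algebra_simps)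
  moreover have "0 \<le> m * (m - n)" using assms by simp
  ultimately show ?thesis using assms by (smt (verit) zero_less_power)
qed

lemma abs_hex_skew_le_hex_norm:
  assumes "0 < n" "n \<le> m" "m \<le> 2*n"
  shows "\<bar>hex_skew m n\<bar> \<le> hex_norm m n"
proof -
  have "hex_norm m n - hex_skew m n = 3 * (m * (m - n))"
    "hex_norm m n + hex_skew m n = (2*n - m) * (n + m)"
    by (simp_all add: power2_eq_square algebra_simps)
  moreover have "0 \<le> m * (m - n)" "0 \<le> (2*n - m) * (n + m)" using assms by simp_all
  ultimately show ?thesis by linarith
qed

lemma hex_cos_scale:
  assumes "d \<noteq> 0"
  shows "hex_cos (d*m) (d*n) = hex_cos m n"
proof -
  have e: "hex_norm (d*m) (d*n) = d^2 * hex_norm m n" "hex_skew (d*m) (d*n) = d^2 * hex_skew m n"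
    by (simp_all add: power2_eq_square algebra_simps)
  have "real_of_int (d^2) > 0" using assms by simp
  hence "\<bar>of_int (d^2) * a\<bar> / (2 * (of_int (d^2) * b)) = \<bar>a\<bar> / (2 * b)" for a b :: real
    by (simp add: abs_mult)
  then show ?thesis unfolding hex_cos_def e of_int_mult by (simp only:)
qed

lemma hex_cos_rotate: "hex_cos (m + n) (2*m - n) = hex_cos m n"
proof -
  have e: "hex_norm (m + n) (2*m - n) = 3 * hex_norm m n"
      "hex_skew (m + n) (2*m - n) = - 3 * hex_skew m n"
    by (simp_all add: power2_eq_square algebra_simps)
  have "\<bar>(- 3) * a\<bar> / (2 * (3 * b)) = \<bar>a\<bar> / (2 * b)" for a b :: real
    by (simp add: abs_mult)
  then show ?thesis unfolding hex_cos_def e of_int_mult of_int_minus of_int_numeral by (simp only:)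
qed

text \<open>After division by the gcd, a pair with \<open>3 dvd m + n\<close> is the image of a coprime pair
  under \<open>(m, n) \<mapsto> (m + n, 2m - n)\<close>, which leaves \<open>hex_cos\<close> invariant.\<close>
lemma exists_coprime_hex_pair:
  assumes "0 < n" "n \<le> m" "m \<le> 2*n"
  obtains m' n' where "coprime m' n'" "0 < n'" "n' \<le> m'" "m' \<le> 2*n'" "\<not> 3 dvd (m' + n')"
    "hex_cos m' n' = hex_cos m n"
proof -
  define d where "d = gcd m n"
  have "d > 0" using assms by (simp add: d_def)
  obtain m0 n0 where m: "m = d * m0" and n: "n = d * n0" and cop0: "coprime m0 n0"
    using gcd_coprime_exists[of m n] \<open>d > 0\<close> unfolding d_def by (auto simp: mult.commute)
  have range0: "0 < n0" "n0 \<le> m0" "m0 \<le> 2*n0"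
    using assms \<open>d > 0\<close> unfolding m n by (simp_all add: zero_less_mult_iff)
  have cos0: "hex_cos m0 n0 = hex_cos m n" using \<open>d > 0\<close> unfolding m n by (simp add: hex_cos_scale)
  show thesis
  proof (cases "3 dvd (m0 + n0)")
    case False
    with that cop0 range0 cos0 show thesis by blast
  next
    case True
    then obtain k where k: "m0 + n0 = 3 * k" by blast
    define l where "l = m0 - k"
    have mn0: "m0 = k + l" "n0 = 2*k - l" using k by (simp_all add: l_def)
    have "coprime k l"
      using cop0 unfolding mn0 by (metis coprime_common_divisor coprimeI dvd_add dvd_diff dvd_mult)
    moreover have "\<not> 3 dvd (k + l)"
    proof
      assume h: "3 dvd (k + l)"
      have "n0 = 3*k - (k + l)" using mn0 by simp
      hence "3 dvd n0" using h by (metis dvd_diff dvd_triv_left)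
      moreover have "3 dvd m0" using h mn0 by simp
      ultimately show False using cop0 coprime_common_divisor by fastforce
    qed
    moreover have "0 < l" "l \<le> k" "k \<le> 2*l" using range0 mn0 by linarith+
    moreover have "hex_cos k l = hex_cos m n" using cos0 hex_cos_rotate[of k l] by (simp add: mn0)
    ultimately show thesis using that by blast
  qed
qed

text \<open>The rational points of the ellipse \<open>X\<^sup>2 + 3Y\<^sup>2 = Z\<^sup>2\<close>, parametrised by the slope
  \<open>(Z + X) / Y\<close>.\<close>
lemma hex_cos_of_ellipse_point:
  fixes X Y Z :: int
  assumes "X \<ge> 0" "Y > 0" "X^2 + 3*Y^2 = Z^2" "2*X \<le> Z"
  shows "0 < 2*Y" "2*Y \<le> X + Y + Z" "X + Y + Z \<le> 2*(2*Y)"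
    and "hex_cos (X + Y + Z) (2*Y) = of_int X / of_int Z"
proof -
  have ZX: "(Z + X) * (Z - X) = 3*Y^2" using assms(3) by (simp add: power2_eq_square algebra_simps)
  have "Z > 0" using assms by (smt (verit) zero_less_power2)
  have "Y^2 \<le> (Z + X)^2"
    using assms \<open>Z > 0\<close> by (smt (verit) power_mono zero_le_power2)
  hence "Y \<le> Z + X" using assms \<open>Z > 0\<close> by (simp add: power_mono_iff abs_le_square_iff)
  moreover have "(Z + X)^2 \<le> (3*Y)^2"
  proof -
    have "(Z + X) * (2*Z - 4*X) \<ge> 0" using assms \<open>Z > 0\<close> by simp
    thus ?thesis using ZX by (simp add: power2_eq_square algebra_simps)
  qed
  hence "Z + X \<le> 3*Y" by (rule power2_le_imp_le) (use assms in simp)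
  ultimately show "0 < 2*Y" "2*Y \<le> X + Y + Z" "X + Y + Z \<le> 2*(2*Y)" using assms by linarith+
  have "hex_skew (X + Y + Z) (2*Y) = -4 * X * (Z + X)"
    "hex_norm (X + Y + Z) (2*Y) = 2 * Z * (Z + X)"
    using ZX by (simp_all add: power2_eq_square algebra_simps)
  then show "hex_cos (X + Y + Z) (2*Y) = of_int X / of_int Z"
    unfolding hex_cos_def using assms \<open>Z > 0\<close> by (simp add: abs_mult)
qed

lemma coprime_mult_add_iff: "coprime (a + c * b) b \<longleftrightarrow> coprime a (b::int)"
  by (metis add.commute coprime_commute coprime_iff_gcd_eq_1 gcd_add_mult mult.commute)

lemma coprime_hex_norm_index:
  fixes m n :: int
  assumes cop: "coprime m n" and n3: "\<not> 3 dvd (m + n)"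
  shows "coprime (hex_norm m n) ((2*m - n) * n)"
proof -
  have "coprime (m^2 + (n - m) * n) n" unfolding coprime_mult_add_iff using cop by simp
  moreover have "hex_norm m n = m^2 + (n - m) * n" by (simp add: power2_eq_square algebra_simps)
  ultimately have c1: "coprime (hex_norm m n) n" by metis
  define u where "u = 2*m - n"
  have "m + n = 3*m - u" by (simp add: u_def)
  hence "\<not> 3 dvd u" using n3 by (metis dvd_diff dvd_triv_left)
  hence "coprime 3 u" by (simp add: prime_imp_coprime_int)
  moreover have "coprime m u"
    using cop coprime_mult_add_iff[of "-n" 2 m] by (simp add: u_def coprime_commute)
  ultimately have "coprime (3*m^2 + (u - 3*m) * u) u" unfolding coprime_mult_add_iff by simp
  moreover have "hex_norm m n = 3*m^2 + (u - 3*m) * u"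
    by (simp add: u_def power2_eq_square algebra_simps)
  ultimately have "coprime (hex_norm m n) (2*m - n)" by (simp add: u_def)
  with c1 show ?thesis by simp
qed

section \<open>The hexagonal lattice\<close>

definition hex_vec :: "int \<Rightarrow> int \<Rightarrow> real^2" where
  "hex_vec a b = vector [of_int a - of_int b / 2, of_int b * sqrt 3 / 2]"

lemma hex_vec_nth [simp]:
  "hex_vec a b $ 1 = of_int a - of_int b / 2" "hex_vec a b $ 2 = of_int b * sqrt 3 / 2"
  by (simp_all add: hex_vec_def)

lemma inner_hex_vec: "hex_vec a b \<bullet> hex_vec c e = of_int (2*a*c + 2*b*e - a*e - b*c) / 2"
proof -
  have "hex_vec a b \<bullet> hex_vec c e
      = (of_int a - of_int b/2) * (of_int c - of_int e/2)
        + (of_int b * of_int e) * (sqrt 3 * sqrt 3) / 4"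
    by (simp add: inner_vec2 field_simps)
  thus ?thesis by (simp add: field_simps)
qed

lemma inner_hex_vec_self: "hex_vec a b \<bullet> hex_vec a b = of_int (a^2 - a*b + b^2)"
  unfolding inner_hex_vec by (simp add: power2_eq_square field_simps)

lemma det_cols_hex_vec: "det (cols (hex_vec a b) (hex_vec c e)) = sqrt 3 / 2 * of_int (a*e - b*c)"
  unfolding det_cols by (simp add: field_simps)

lemma hex_vec_lincomb:
  "of_int i *\<^sub>R hex_vec a b + of_int j *\<^sub>R hex_vec c e
    = hex_vec (i*a + j*c) (i*b + j*e)"
  by (simp add: vec2_eq_iff field_simps)

lemma hex_matrix_eq_cols: "hex_matrix = cols (hex_vec 1 0) (hex_vec 0 1)"
  by (simp add: hex_matrix_def cols_def vec_eq_iff forall_2)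

lemma mem_Lambda_h_iff: "z \<in> Lambda_h \<longleftrightarrow> (\<exists>a b. z = hex_vec a b)"
  unfolding Lambda_h_def hex_matrix_eq_cols mem_lattice_of_cols hex_vec_lincomb by simp

lemma lat_det_Lambda_h: "lat_det Lambda_h = sqrt 3 / 2"
  unfolding Lambda_h_def hex_matrix_eq_cols by (simp add: lat_det_cols det_cols_hex_vec)

lemma lattice_of_cols_subset_Lambda_h:
  assumes "x \<in> Lambda_h" "y \<in> Lambda_h"
  shows "lattice_of (cols x y) \<subseteq> Lambda_h"
proof
  fix z assume "z \<in> lattice_of (cols x y)"
  then obtain i j where z: "z = of_int i *\<^sub>R x + of_int j *\<^sub>R y"
    unfolding mem_lattice_of_cols by blast
  obtain a b c e where hx: "x = hex_vec a b" and hy: "y = hex_vec c e"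
    using assms unfolding mem_Lambda_h_iff by blast
  show "z \<in> Lambda_h" unfolding mem_Lambda_h_iff z hx hy hex_vec_lincomb by blast
qed

lemma Lambda_h_basis_data:
  assumes "x \<in> Lambda_h" "y \<in> Lambda_h"
  obtains N P D :: int where "x \<bullet> x = of_int N" "x \<bullet> y = of_int P / 2"
    "det (cols x y) = sqrt 3 / 2 * of_int D"
  using assms unfolding mem_Lambda_h_iff
  by (metis inner_hex_vec inner_hex_vec_self det_cols_hex_vec)

section \<open>The lattice \<open>\<Gamma>\<^sub>\<theta>\<close>\<close>

lemma Gamma_theta_eq_cols: "Gamma_theta m n = lattice_of (cols (hex_vec m (m-n)) (hex_vec (m-n) m))"
  unfolding Gamma_theta_def
  by (rule arg_cong[of _ _ lattice_of])
    (simp add: Gamma_mat_def cols_def vec_eq_iff forall_2 field_simps)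

lemma Gamma_theta_basis_data:
  "hex_vec m (m-n) \<bullet> hex_vec m (m-n) = of_int (hex_norm m n)"
  "hex_vec (m-n) m \<bullet> hex_vec (m-n) m = of_int (hex_norm m n)"
  "hex_vec m (m-n) \<bullet> hex_vec (m-n) m = - of_int (hex_skew m n) / 2"
  "det (cols (hex_vec m (m-n)) (hex_vec (m-n) m)) = sqrt 3 / 2 * of_int ((2*m - n)*n)"
  by (simp_all add: inner_hex_vec_self inner_hex_vec det_cols_hex_vec
      power2_eq_square algebra_simps)

text \<open>The conditions on \<open>m/n\<close> allow \<open>n < 0\<close>; all forms involved are even in \<open>(m, n)\<close>.\<close>
lemma hex_ratio_bounds:
  assumes "1 \<le> real_of_int m / real_of_int n" "real_of_int m / real_of_int n \<le> 2"
  shows "(2*m - n)*n > 0" "\<bar>hex_skew m n\<bar> \<le> hex_norm m n" "hex_norm m n > 0"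
proof -
  have pos: "(2*m - n)*n > 0 \<and> \<bar>hex_skew m n\<bar> \<le> hex_norm m n \<and> hex_norm m n > 0"
    if "0 < n" "n \<le> m" "m \<le> 2*n" for m n :: int
    using that abs_hex_skew_le_hex_norm hex_norm_pos by simp
  have "(2*(-m) - (-n))*(-n) = (2*m - n)*n" "hex_skew (-m) (-n) = hex_skew m n"
    "hex_norm (-m) (-n) = hex_norm m n"
    by (simp_all add: power2_eq_square algebra_simps)
  with hex_param_range[OF assms] pos[of n m] pos[of "-n" "-m"]
  show "(2*m - n)*n > 0" "\<bar>hex_skew m n\<bar> \<le> hex_norm m n" "hex_norm m n > 0"
    by auto
qed

context
  fixes m n :: int
  assumes ratio: "1 \<le> real_of_int m / real_of_int n" "real_of_int m / real_of_int n \<le> 2"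
begin

text \<open>Naming the three forms keeps the simplifier from expanding them under \<open>of_int\<close>.\<close>
private definition "Q = hex_norm m n"
private definition "F = hex_skew m n"
private definition "D = (2*m - n)*n"

private lemma basis_data:
  "hex_vec m (m-n) \<bullet> hex_vec m (m-n) = of_int Q"
  "hex_vec (m-n) m \<bullet> hex_vec (m-n) m = of_int Q"
  "hex_vec m (m-n) \<bullet> hex_vec (m-n) m = - of_int F / 2"
  "det (cols (hex_vec m (m-n)) (hex_vec (m-n) m)) = sqrt 3 / 2 * of_int D"
  unfolding Q_def F_def D_def by (fact Gamma_theta_basis_data)+

private lemma bounds: "real_of_int D > 0" "\<bar>real_of_int F\<bar> \<le> real_of_int Q" "real_of_int Q > 0"
  using hex_ratio_bounds[OF ratio] unfolding Q_def F_def D_def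
  by (simp_all only: of_int_0_less_iff)

lemma reduced_basis_Gamma_theta: "reduced_basis (hex_vec m (m-n)) (hex_vec (m-n) m)"
  using bounds unfolding reduced_basis_def basis_data by simp

lemma Gamma_theta_in_WR_hex: "Gamma_theta m n \<in> WR_hex"
  using reduced_basis_well_rounded[OF reduced_basis_Gamma_theta]
    lattice_of_cols_subset_Lambda_h[of "hex_vec m (m-n)" "hex_vec (m-n) m"]
  unfolding WR_hex_def Gamma_theta_eq_cols by (auto simp: mem_Lambda_h_iff)

lemma lat_min_Gamma_theta: "lat_min (Gamma_theta m n) = of_int (hex_norm m n)"
  unfolding Gamma_theta_eq_cols lat_min_reduced_basis[OF reduced_basis_Gamma_theta]
  by (simp add: basis_data Q_def)

lemma lat_det_Gamma_theta: "lat_det (Gamma_theta m n) = sqrt 3 / 2 * of_int ((2*m - n)*n)"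
  using bounds(1) reduced_basis_Gamma_theta unfolding Gamma_theta_eq_cols D_def[symmetric]
  by (simp add: lat_det_cols reduced_basis_def basis_data abs_mult)

lemma lat_index_Gamma_theta: "lat_index (Gamma_theta m n) = of_int ((2*m - n)*n)"
  by (simp add: lat_index_def lat_det_Gamma_theta lat_det_Lambda_h)

lemma cos_lattice_angle_Gamma_theta: "cos (lattice_angle (Gamma_theta m n)) = hex_cos m n"
  unfolding Gamma_theta_eq_cols cos_lattice_angle_reduced_basis[OF reduced_basis_Gamma_theta]
    basis_data hex_cos_def F_def[symmetric] Q_def[symmetric]
  by simp

end

lemma lattice_angle_Gamma_theta:
  assumes "hex_param t m n" "0 \<le> t" "t \<le> pi"
  shows "lattice_angle (Gamma_theta m n) = t"
proof -
  have ratio: "1 \<le> real_of_int m / real_of_int n" "real_of_int m / real_of_int n \<le> 2"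
    and "cos t = hex_cos m n" using assms(1) by (auto simp: hex_param_iff)
  moreover have "pi/3 \<le> lattice_angle (Gamma_theta m n)" "lattice_angle (Gamma_theta m n) \<le> pi/2"
    unfolding Gamma_theta_eq_cols
    by (rule lattice_angle_reduced_basis_bounds[OF reduced_basis_Gamma_theta[OF ratio]])+
  hence "0 \<le> lattice_angle (Gamma_theta m n)" "lattice_angle (Gamma_theta m n) \<le> pi"
    using pi_gt_zero by linarith+
  ultimately show ?thesis
    using cos_inj_pi cos_lattice_angle_Gamma_theta assms(2,3) by metis
qed

section \<open>Well-rounded sublattices of \<open>\<Lambda>\<^sub>h\<close>\<close>

lemma WR_hex_obtains_basis:
  assumes "G \<in> WR_hex"
  obtains x y where "reduced_basis x y" "G = lattice_of (cols x y)" "x \<in> Lambda_h" "y \<in> Lambda_h"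
proof -
  have wr: "well_rounded G" and sub: "G \<subseteq> Lambda_h" using assms by (auto simp: WR_hex_def)
  obtain x y where "reduced_basis x y" and G: "G = lattice_of (cols x y)"
    using well_rounded_obtains_reduced_basis[OF wr] .
  moreover have "x \<in> Lambda_h" "y \<in> Lambda_h"
    using sub basis_mem_lattice_of_cols unfolding G by auto
  ultimately show thesis using that by blast
qed

text \<open>The Lagrange identity, written in the integral coordinates of \<open>\<Lambda>\<^sub>h\<close>.\<close>
lemma reduced_basis_Lambda_h_ellipse:
  assumes red: "reduced_basis x y" and "x \<in> Lambda_h" "y \<in> Lambda_h"
  obtains N P D :: int where "x \<bullet> x = of_int N" "x \<bullet> y = of_int P / 2"
    "det (cols x y) = sqrt 3 / 2 * of_int D" "P^2 + 3*D^2 = (2*N)^2" "D \<noteq> 0" "\<bar>P\<bar> \<le> N"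
proof -
  obtain N P D where N: "x \<bullet> x = of_int N" and P: "x \<bullet> y = of_int P / 2"
    and D: "det (cols x y) = sqrt 3 / 2 * of_int D"
    using Lambda_h_basis_data assms(2,3) by blast
  have yy: "y \<bullet> y = of_int N" using red N by (simp add: reduced_basis_def)
  have "(sqrt 3 / 2 * of_int D)\<^sup>2 = of_int N * of_int N - (of_int P / 2)\<^sup>2"
    using det_cols_squared[of x y] unfolding D N P yy .
  hence "real_of_int (P^2 + 3*D^2) = real_of_int ((2*N)^2)"
    by (simp add: power_mult_distrib power_divide field_simps power2_eq_square)
  moreover have "D \<noteq> 0" using red D by (auto simp: reduced_basis_def)
  moreover have "real_of_int \<bar>P\<bar> \<le> real_of_int N" using red N P by (simp add: reduced_basis_def)
  ultimately show thesis using that N P D of_int_eq_iff of_int_le_iff by blast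
qed

lemma hex_ratio_if_range:
  assumes "0 < n" "n \<le> m" "m \<le> 2*n"
  shows "1 \<le> real_of_int m / real_of_int n" "real_of_int m / real_of_int n \<le> 2"
  using assms by (simp_all add: field_simps)

lemma hex_param_lattice_angle_WR_hex:
  assumes "G \<in> WR_hex"
  shows "\<exists>m n. hex_param (lattice_angle G) m n"
proof -
  obtain x y where red: "reduced_basis x y" and G: "G = lattice_of (cols x y)"
    and xy: "x \<in> Lambda_h" "y \<in> Lambda_h"
    using WR_hex_obtains_basis[OF assms] .
  obtain N P D where N: "x \<bullet> x = of_int N" and P: "x \<bullet> y = of_int P / 2"
    and "det (cols x y) = sqrt 3 / 2 * of_int D"
    and ell: "P^2 + 3*D^2 = (2*N)^2" and "D \<noteq> 0" "\<bar>P\<bar> \<le> N"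
    using reduced_basis_Lambda_h_ellipse[OF red xy] .
  hence ell': "\<bar>P\<bar>^2 + 3*\<bar>D\<bar>^2 = (2*N)^2" by simp
  have "0 < \<bar>D\<bar>" "2 * \<bar>P\<bar> \<le> 2*N" using \<open>D \<noteq> 0\<close> \<open>\<bar>P\<bar> \<le> N\<close> by simp_all
  note pt = hex_cos_of_ellipse_point[OF abs_ge_zero this(1) ell' this(2)]
  obtain m n where cop: "coprime m n" and range: "0 < n" "n \<le> m" "m \<le> 2*n"
    and n3: "\<not> 3 dvd (m + n)" and "hex_cos m n = hex_cos (\<bar>P\<bar> + \<bar>D\<bar> + 2*N) (2*\<bar>D\<bar>)"
    using exists_coprime_hex_pair[OF pt(1-3)] .
  moreover have "cos (lattice_angle G) = of_int \<bar>P\<bar> / of_int (2*N)"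
    unfolding G cos_lattice_angle_reduced_basis[OF red] N P by simp
  ultimately have "cos (lattice_angle G) = hex_cos m n" using pt(4) by simp
  then show ?thesis
    unfolding hex_param_iff using cop n3 hex_ratio_if_range[OF range] by blast
qed

lemma WR_hex_min_det_integral:
  assumes "G \<in> WR_hex"
  obtains N D :: int where "lat_min G = of_int N" "lat_det G = sqrt 3 / 2 * of_int D"
proof -
  obtain x y where red: "reduced_basis x y" and G: "G = lattice_of (cols x y)"
    and xy: "x \<in> Lambda_h" "y \<in> Lambda_h"
    using WR_hex_obtains_basis[OF assms] .
  obtain N D where N: "x \<bullet> x = of_int N" and D: "det (cols x y) = sqrt 3 / 2 * of_int D"
    using Lambda_h_basis_data[OF xy] by metis
  have "lat_min G = of_int N" "lat_det G = sqrt 3 / 2 * of_int \<bar>D\<bar>"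
    using red unfolding G by (simp_all add: lat_min_reduced_basis N
      lat_det_cols reduced_basis_def D abs_mult)
  with that show thesis by blast
qed

lemma WR_hex_angle_eq_Gamma_theta_imp_similar:
  assumes ratio: "1 \<le> real_of_int m / real_of_int n" "real_of_int m / real_of_int n \<le> 2"
    and G: "G \<in> WR_hex" and angle: "lattice_angle G = lattice_angle (Gamma_theta m n)"
  obtains A where "orthogonal_matrix A"
    "G = (\<lambda>z. sqrt (lat_min G / lat_min (Gamma_theta m n)) *\<^sub>R (A *v z)) ` Gamma_theta m n"
proof -
  note redv = reduced_basis_Gamma_theta[OF ratio]
  obtain x y where red: "reduced_basis x y" and Gxy: "G = lattice_of (cols x y)"
    using WR_hex_obtains_basis[OF G] .
  have "\<bar>x \<bullet> y\<bar> / (x \<bullet> x)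
      = \<bar>hex_vec m (m-n) \<bullet> hex_vec (m-n) m\<bar> / (hex_vec m (m-n) \<bullet> hex_vec m (m-n))"
    using angle cos_lattice_angle_reduced_basis[OF red] cos_lattice_angle_reduced_basis[OF redv]
    by (simp add: Gxy Gamma_theta_eq_cols)
  from similar_if_cos_eq[OF red redv this] that show thesis
    unfolding Gxy Gamma_theta_eq_cols lat_min_reduced_basis[OF red] lat_min_reduced_basis[OF redv] .
qed

text \<open>Minimum and determinant scale by the same factor \<open>\<alpha>\<^sup>2\<close> and are integral (up to \<open>\<surd>3/2\<close>);
  since the minimum and the index of \<open>\<Gamma>\<^sub>\<theta>\<close> are coprime, \<open>\<alpha>\<^sup>2\<close> is an integer.\<close>
lemma scaled_Gamma_theta_in_WR_hex_imp_square_nat: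
  assumes hp: "hex_param t m n" and G: "G \<in> WR_hex" and A: "orthogonal_matrix A" and "\<alpha> \<noteq> 0"
    and GA: "G = (\<lambda>z. \<alpha> *\<^sub>R (A *v z)) ` Gamma_theta m n"
  obtains k :: nat where "k > 0" "\<alpha>\<^sup>2 = real k"
proof -
  define Q where "Q = hex_norm m n"
  define I where "I = (2*m - n)*n"
  have ratio: "1 \<le> real_of_int m / real_of_int n" "real_of_int m / real_of_int n \<le> 2"
    and "coprime m n" "\<not> 3 dvd (m + n)" using hp by (auto simp: hex_param_iff)
  have cop: "coprime Q I" and "Q > 0"
    using coprime_hex_norm_index[OF \<open>coprime m n\<close> \<open>\<not> 3 dvd (m + n)\<close>] hex_ratio_bounds[OF ratio]
    by (simp_all add: Q_def I_def)
  obtain N D where N: "lat_min G = of_int N" and D: "lat_det G = sqrt 3 / 2 * of_int D"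
    using WR_hex_min_det_integral[OF G] .
  note scaled = lat_min_scaled_orthogonal[OF A \<open>\<alpha> \<noteq> 0\<close> reduced_basis_Gamma_theta[OF ratio]]
    lat_det_scaled_orthogonal[OF A \<open>\<alpha> \<noteq> 0\<close> reduced_basis_Gamma_theta[OF ratio]]
  have "of_int N = \<alpha>\<^sup>2 * of_int Q" "sqrt 3 / 2 * of_int D = \<alpha>\<^sup>2 * (sqrt 3 / 2 * of_int I)"
    using scaled lat_min_Gamma_theta[OF ratio] lat_det_Gamma_theta[OF ratio]
    unfolding N[symmetric] D[symmetric] GA Gamma_theta_eq_cols by (simp_all add: Q_def I_def)
  hence "real_of_int (D * Q) = real_of_int (N * I)" by simp
  hence "Q dvd N * I" by (metis dvd_triv_right of_int_eq_iff)
  with cop have "Q dvd N" by (simp add: coprime_dvd_mult_left_iff)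
  then obtain k where k: "N = Q * k" by blast
  have "\<alpha>\<^sup>2 = of_int k" using \<open>of_int N = \<alpha>\<^sup>2 * of_int Q\<close> \<open>Q > 0\<close> by (simp add: k)
  moreover have "k > 0" using \<open>\<alpha> \<noteq> 0\<close> \<open>\<alpha>\<^sup>2 = of_int k\<close>
    by (smt (verit) of_int_le_0_iff zero_less_power2)
  ultimately show thesis using that[of "nat k"] by simp
qed

lemma WR_hex_angle_eq_Gamma_theta_imp_scaled:
  assumes hp: "hex_param t m n" and G: "G \<in> WR_hex"
    and angle: "lattice_angle G = lattice_angle (Gamma_theta m n)"
  obtains k :: nat and A where "k > 0" "orthogonal_matrix A"
    "G = (\<lambda>z. sqrt (real k) *\<^sub>R (A *v z)) ` Gamma_theta m n"
proof -
  have ratio: "1 \<le> real_of_int m / real_of_int n" "real_of_int m / real_of_int n \<le> 2"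
    using hp by (auto simp: hex_param_iff)
  define \<alpha> where "\<alpha> = sqrt (lat_min G / lat_min (Gamma_theta m n))"
  obtain A where A: "orthogonal_matrix A" and GA: "G = (\<lambda>z. \<alpha> *\<^sub>R (A *v z)) ` Gamma_theta m n"
    using WR_hex_angle_eq_Gamma_theta_imp_similar[OF ratio G angle] unfolding \<alpha>_def .
  have "lat_min G > 0" "lat_min (Gamma_theta m n) > 0"
    using WR_hex_obtains_basis[OF G] reduced_basis_inner_pos lat_min_reduced_basis
      lat_min_Gamma_theta[OF ratio] hex_ratio_bounds(3)[OF ratio] by (metis of_int_0_less_iff)+
  hence "\<alpha> > 0" by (simp add: \<alpha>_def)
  then obtain k :: nat where "k > 0" "\<alpha>\<^sup>2 = real k"
    using scaled_Gamma_theta_in_WR_hex_imp_square_nat[OF hp G A _ GA] by blast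
  with \<open>\<alpha> > 0\<close> have "\<alpha> = sqrt (real k)" by (metis real_sqrt_unique less_imp_le)
  with that \<open>k > 0\<close> A GA show thesis by blast
qed

lemma mem_C_h_iff_hex_param:
  assumes "pi/3 \<le> t" "t \<le> pi/2"
  shows "t \<in> C_h \<longleftrightarrow> (\<exists>m n. hex_param t m n)"
proof
  assume "t \<in> C_h"
  then obtain G where "G \<in> WR_hex" "t = lattice_angle G" by (auto simp: C_h_def)
  thus "\<exists>m n. hex_param t m n" using hex_param_lattice_angle_WR_hex by blast
next
  assume "\<exists>m n. hex_param t m n"
  then obtain m n where hp: "hex_param t m n" by blast
  have "0 \<le> t" "t \<le> pi" using assms pi_gt_zero by linarith+
  with hp have "lattice_angle (Gamma_theta m n) = t" by (rule lattice_angle_Gamma_theta)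
  moreover have "Gamma_theta m n \<in> WR_hex"
    using hp Gamma_theta_in_WR_hex by (simp add: hex_param_iff)
  ultimately show "t \<in> C_h" using assms unfolding C_h_def by force
qed

context
  fixes t :: real and m n :: int
  assumes hp: "hex_param t m n" and t: "t \<in> C_h"
begin

private lemma ratio: "1 \<le> real_of_int m / real_of_int n" "real_of_int m / real_of_int n \<le> 2"
  using hp by (simp_all add: hex_param_iff)

private lemma reduced_basis_Gamma: "reduced_basis (hex_vec m (m-n)) (hex_vec (m-n) m)"
  by (rule reduced_basis_Gamma_theta[OF ratio])

private lemma lattice_angle_Gamma: "lattice_angle (Gamma_theta m n) = t"
  using lattice_angle_Gamma_theta[OF hp] t pi_gt_zero by (auto simp: C_h_def)

lemma mem_C_h_class_iff_scaled_Gamma_theta: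
  "G \<in> C_h_class t \<longleftrightarrow> (\<exists>k::nat. \<exists>A. k > 0 \<and> orthogonal_matrix A
       \<and> G = (\<lambda>x. sqrt (real k) *\<^sub>R (A *v x)) ` Gamma_theta m n) \<and> G \<subseteq> Lambda_h"
proof
  assume "G \<in> C_h_class t"
  then have "G \<in> WR_hex" "lattice_angle G = lattice_angle (Gamma_theta m n)"
    by (auto simp: C_h_class_def lattice_angle_Gamma)
  then obtain k :: nat and A where "k > 0" "orthogonal_matrix A"
    "G = (\<lambda>z. sqrt (real k) *\<^sub>R (A *v z)) ` Gamma_theta m n"
    using WR_hex_angle_eq_Gamma_theta_imp_scaled[OF hp] by metis
  with \<open>G \<in> WR_hex\<close> show "(\<exists>k::nat. \<exists>A. k > 0 \<and> orthogonal_matrix A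
       \<and> G = (\<lambda>x. sqrt (real k) *\<^sub>R (A *v x)) ` Gamma_theta m n) \<and> G \<subseteq> Lambda_h"
    by (auto simp: WR_hex_def)
next
  assume "(\<exists>k::nat. \<exists>A. k > 0 \<and> orthogonal_matrix A
       \<and> G = (\<lambda>x. sqrt (real k) *\<^sub>R (A *v x)) ` Gamma_theta m n) \<and> G \<subseteq> Lambda_h"
  then obtain k :: nat and A where "k > 0" and A: "orthogonal_matrix A"
    and G: "G = (\<lambda>x. sqrt (real k) *\<^sub>R (A *v x)) ` Gamma_theta m n" and "G \<subseteq> Lambda_h"
    by blast
  have "sqrt (real k) \<noteq> 0" using \<open>k > 0\<close> by simp
  note scaled = well_rounded_scaled_orthogonal[OF A this reduced_basis_Gamma]
    lattice_angle_scaled_orthogonal[OF A this reduced_basis_Gamma]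
  show "G \<in> C_h_class t"
    using scaled \<open>G \<subseteq> Lambda_h\<close> lattice_angle_Gamma
    unfolding C_h_class_def WR_hex_def G Gamma_theta_eq_cols by simp
qed

lemma C_h_class_eq_similar_Gamma_theta:
  "C_h_class t = {G \<in> WR_hex. similar G (Gamma_theta m n)}"
proof (intro set_eqI iffI)
  fix G assume G: "G \<in> C_h_class t"
  then obtain k :: nat and A where "k > 0" "orthogonal_matrix A"
    "G = (\<lambda>x. sqrt (real k) *\<^sub>R (A *v x)) ` Gamma_theta m n"
    unfolding mem_C_h_class_iff_scaled_Gamma_theta by blast
  then have "similar G (Gamma_theta m n)" using similar_scaled_orthogonal_image by simp
  with G show "G \<in> {G \<in> WR_hex. similar G (Gamma_theta m n)}" by (simp add: C_h_class_def)
next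
  fix G assume "G \<in> {G \<in> WR_hex. similar G (Gamma_theta m n)}"
  then have "G \<in> WR_hex" and "similar G (Gamma_theta m n)" by auto
  then obtain \<alpha> A x y where "\<alpha> \<noteq> 0" "orthogonal_matrix A"
    "Gamma_theta m n = (\<lambda>z. \<alpha> *\<^sub>R (A *v z)) ` G"
    and red: "reduced_basis x y" and G: "G = lattice_of (cols x y)"
    unfolding similar_def by (metis WR_hex_obtains_basis)
  then have "lattice_angle G = t"
    using lattice_angle_scaled_orthogonal[OF _ _ red] lattice_angle_Gamma by metis
  with \<open>G \<in> WR_hex\<close> show "G \<in> C_h_class t" by (simp add: C_h_class_def)
qed

lemma C_h_class_min_index_ge:
  assumes "G \<in> C_h_class t"
  shows "lat_min G \<ge> lat_min (Gamma_theta m n)" "lat_index G \<ge> lat_index (Gamma_theta m n)"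
proof -
  obtain k :: nat and A where "k > 0" and A: "orthogonal_matrix A"
    and G: "G = (\<lambda>x. sqrt (real k) *\<^sub>R (A *v x)) ` Gamma_theta m n"
    using assms unfolding mem_C_h_class_iff_scaled_Gamma_theta by blast
  have "sqrt (real k) \<noteq> 0" using \<open>k > 0\<close> by simp
  note scaled = lat_min_scaled_orthogonal[OF A this reduced_basis_Gamma]
    lat_det_scaled_orthogonal[OF A this reduced_basis_Gamma]
  have "lat_min G = real k * lat_min (Gamma_theta m n)"
    "lat_det G = real k * lat_det (Gamma_theta m n)"
    using scaled unfolding G Gamma_theta_eq_cols by simp_all
  moreover have "lat_min (Gamma_theta m n) \<ge> 0" "lat_det (Gamma_theta m n) \<ge> 0"
    using reduced_basis_Gamma unfolding Gamma_theta_eq_cols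
    by (simp_all add: lat_min_reduced_basis lat_det_cols reduced_basis_def)
  moreover have "real k \<ge> 1" using \<open>k > 0\<close> by simp
  ultimately show "lat_min G \<ge> lat_min (Gamma_theta m n)"
    "lat_index G \<ge> lat_index (Gamma_theta m n)"
    by (simp_all add: lat_index_def lat_det_Lambda_h mult_le_cancel_right1 divide_right_mono)
qed

end

theorem theorem1p1:
  fixes t :: real
  shows "(pi/3 \<le> t \<and> t \<le> pi/2 \<longrightarrow> (t \<in> C_h \<longleftrightarrow> (\<exists>m n. hex_param t m n)))
    \<and> (\<forall>m n. t \<in> C_h \<and> hex_param t m n \<longrightarrow>
          Gamma_theta m n \<subseteq> Lambda_h
        \<and> C_h_class t = {G \<in> WR_hex. similar G (Gamma_theta m n)}
        \<and> lat_min (Gamma_theta m n) = of_int (n^2 - m*n + m^2)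
        \<and> lat_index (Gamma_theta m n) = of_int ((2*m - n) * n)
        \<and> (\<forall>G \<in> C_h_class t. lat_min G \<ge> lat_min (Gamma_theta m n)
                              \<and> lat_index G \<ge> lat_index (Gamma_theta m n))
        \<and> C_h_class t = {G. (\<exists>k::nat. \<exists>A. k > 0 \<and> orthogonal_matrix A
                              \<and> G = (\<lambda>x. sqrt (real k) *\<^sub>R (A *v x)) ` Gamma_theta m n)
                           \<and> G \<subseteq> Lambda_h})"
proof (intro conjI impI allI)
  show "t \<in> C_h \<longleftrightarrow> (\<exists>m n. hex_param t m n)" if "pi/3 \<le> t \<and> t \<le> pi/2"
    using that mem_C_h_iff_hex_param by blast
  fix m n assume "t \<in> C_h \<and> hex_param t m n"
  then have t: "t \<in> C_h" and hp: "hex_param t m n" by auto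
  have ratio: "1 \<le> real_of_int m / real_of_int n" "real_of_int m / real_of_int n \<le> 2"
    using hp by (simp_all add: hex_param_iff)
  show "Gamma_theta m n \<subseteq> Lambda_h"
    using Gamma_theta_in_WR_hex[OF ratio] by (simp add: WR_hex_def)
  show "C_h_class t = {G \<in> WR_hex. similar G (Gamma_theta m n)}"
    by (rule C_h_class_eq_similar_Gamma_theta[OF hp t])
  show "lat_min (Gamma_theta m n) = of_int (n^2 - m*n + m^2)"
    by (rule lat_min_Gamma_theta[OF ratio])
  show "lat_index (Gamma_theta m n) = of_int ((2*m - n) * n)"
    by (rule lat_index_Gamma_theta[OF ratio])
  show "\<forall>G \<in> C_h_class t. lat_min G \<ge> lat_min (Gamma_theta m n)
                              \<and> lat_index G \<ge> lat_index (Gamma_theta m n)"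
    using C_h_class_min_index_ge[OF hp t] by blast
  show "C_h_class t = {G. (\<exists>k::nat. \<exists>A. k > 0 \<and> orthogonal_matrix A
                              \<and> G = (\<lambda>x. sqrt (real k) *\<^sub>R (A *v x)) ` Gamma_theta m n)
                           \<and> G \<subseteq> Lambda_h}"
    using mem_C_h_class_iff_scaled_Gamma_theta[OF hp t] by blast
qed

end
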